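(* Let $\mathcal{Q}=\left(\frac{\lambda,\ \mu}{F}\right)$ be a generalized quaternion algebra and $\mathbf{a}=a_1i+a_2j+a_3k$, $\mathbf{b}=b_1i+b_2j+b_3k$ pure quaternions. Then $\mathbf{a},\mathbf{b},\mathbf{a}\times\mathbf{b}$ are linearly dependent over $F$ if and only if $N(\mathbf{a})N(\mathbf{b})=(\mathbf{a}\cdot\mathbf{b})^2$. This is equivalent to $N(\mathbf{a}\times\mathbf{b})=0$, i.e. to $-\mu(a_2b_3-a_3b_2)^2-\lambda(a_1b_3-a_3b_1)^2+(a_1b_2-a_2b_1)^2=0$; that is, $\mathbf{a}\times\mathbf{b}$ is isotropic or zero.
   Context: $F$ is a field of characteristic $\neq2$, $\lambda,\mu\in F$ nonzero; $\mathcal{Q}$ has $F$-basis $1,i,j,k$ with $i^2=\lambda$, $j^2=\mu$, $ij=-ji=k$. Norm: $N(x_0+x_1i+x_2j+x_3k)=x_0^2-\lambda x_1^2-\mu x_2^2+\lambda\mu x_3^2$. For pure $\mathbf{a},\mathbf{b}$: $\mathbf{a}\cdot\mathbf{b}=-\lambda a_1b_1-\mu a_2b_2+\lambda\mu a_3b_3$ and $\mathbf{a}\times\mathbf{b}=-\mu(a_2b_3-a_3b_2)\,i+\lambda(a_1b_3-a_3b_1)\,j+(a_1b_2-a_2b_1)\,k$. A nonzero element $X$ is isotropic if $N(X)=0$. *)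

theory Defs
  imports Main
begin

text \<open>Elements of the generalized quaternion algebra (lambda, mu / F), written in the
  F-basis 1, i, j, k: Quat x0 x1 x2 x3 = x0 + x1 i + x2 j + x3 k.\<close>
datatype 'a quat = Quat 'a 'a 'a 'a

fun q0 :: "'a quat \<Rightarrow> 'a" where "q0 (Quat x0 x1 x2 x3) = x0"
fun q1 :: "'a quat \<Rightarrow> 'a" where "q1 (Quat x0 x1 x2 x3) = x1"
fun q2 :: "'a quat \<Rightarrow> 'a" where "q2 (Quat x0 x1 x2 x3) = x2"
fun q3 :: "'a quat \<Rightarrow> 'a" where "q3 (Quat x0 x1 x2 x3) = x3"

definition qzero :: "'a::field quat" where "qzero = Quat 0 0 0 0"

definition qadd :: "'a::field quat \<Rightarrow> 'a quat \<Rightarrow> 'a quat" where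
  "qadd x y = Quat (q0 x + q0 y) (q1 x + q1 y) (q2 x + q2 y) (q3 x + q3 y)"

definition qscale :: "'a::field \<Rightarrow> 'a quat \<Rightarrow> 'a quat" where
  "qscale c x = Quat (c * q0 x) (c * q1 x) (c * q2 x) (c * q3 x)"

definition pure :: "'a::field quat \<Rightarrow> bool" where "pure x \<longleftrightarrow> q0 x = 0"

definition qnorm :: "'a::field \<Rightarrow> 'a \<Rightarrow> 'a quat \<Rightarrow> 'a" where
  "qnorm lam mu x = (q0 x)^2 - lam * (q1 x)^2 - mu * (q2 x)^2 + lam * mu * (q3 x)^2"

definition qdot :: "'a::field \<Rightarrow> 'a \<Rightarrow> 'a quat \<Rightarrow> 'a quat \<Rightarrow> 'a" where
  "qdot lam mu a b = - lam * q1 a * q1 b - mu * q2 a * q2 b + lam * mu * q3 a * q3 b"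

definition qcross :: "'a::field \<Rightarrow> 'a \<Rightarrow> 'a quat \<Rightarrow> 'a quat \<Rightarrow> 'a quat" where
  "qcross lam mu a b = Quat 0
     (- mu * (q2 a * q3 b - q3 a * q2 b))
     (lam * (q1 a * q3 b - q3 a * q1 b))
     (q1 a * q2 b - q2 a * q1 b)"

definition lin_dep3 :: "'a::field quat \<Rightarrow> 'a quat \<Rightarrow> 'a quat \<Rightarrow> bool" where
  "lin_dep3 x y z \<longleftrightarrow> (\<exists>c1 c2 c3. (c1 \<noteq> 0 \<or> c2 \<noteq> 0 \<or> c3 \<noteq> 0) \<and>
      qadd (qadd (qscale c1 x) (qscale c2 y)) (qscale c3 z) = qzero)"

end

theory Submission
  imports Defs
begin

text \<open>The triple product of a, b and a \<times> b is
  E = -\<mu>(a2 b3 - a3 b2)^2 - \<lambda>(a1 b3 - a3 b1)^2 + (a1 b2 - a2 b1)^2,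
  and three pure quaternions are linearly dependent exactly when their triple product, a 3 \<times> 3
  determinant, vanishes. On the other hand N(a \<times> b) = \<lambda>\<mu>E, and the Lagrange identity
  N(a)N(b) = (a\<cdot>b)^2 + N(a \<times> b) holds. Since \<lambda>\<mu> \<noteq> 0, all four conditions say E = 0.\<close>

definition qtriple :: "'a::field quat \<Rightarrow> 'a quat \<Rightarrow> 'a quat \<Rightarrow> 'a" where
  "qtriple x y z =
     q1 x * (q2 y * q3 z - q3 y * q2 z) - q2 x * (q1 y * q3 z - q3 y * q1 z)
       + q3 x * (q1 y * q2 z - q2 y * q1 z)"

lemma pure_qcross: "pure (qcross lam mu x y)"
  by (simp add: pure_def qcross_def)

lemma pure_eq_qzero_iff: "pure x \<Longrightarrow> x = qzero \<longleftrightarrow> q1 x = 0 \<and> q2 x = 0 \<and> q3 x = 0"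
  by (cases x) (simp add: pure_def qzero_def)

lemma lin_dep3_imp_qtriple_eq_0:
  assumes "lin_dep3 x y z"
  shows "qtriple x y z = 0"
proof -
  obtain c1 c2 c3 where nontrivial: "c1 \<noteq> 0 \<or> c2 \<noteq> 0 \<or> c3 \<noteq> 0"
    and comb: "qadd (qadd (qscale c1 x) (qscale c2 y)) (qscale c3 z) = qzero"
    using assms unfolding lin_dep3_def by blast
  have eq1: "c1 * q1 x + c2 * q1 y + c3 * q1 z = 0"
   and eq2: "c1 * q2 x + c2 * q2 y + c3 * q2 z = 0"
   and eq3: "c1 * q3 x + c2 * q3 y + c3 * q3 z = 0"
    using comb by (simp_all add: qadd_def qscale_def qzero_def)
  have "c * qtriple x y z = 0" if "c \<in> {c1, c2, c3}" for c
    using that eq1 eq2 eq3 unfolding qtriple_def by auto algebra+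
  then show ?thesis
    using nontrivial by auto
qed

text \<open>Up to the signs of its components, qcross 1 1 is the Euclidean cross product of the
  vector parts, so the coefficients below form a column of the adjugate of the matrix with rows
  x, y, z.\<close>

lemma cofactor_combination_eq_qzero:
  fixes x y z :: "'a::field quat"
  assumes "pure x" "pure y" "pure z" "qtriple x y z = 0" "f \<in> {q1, q2, q3}"
  shows "qadd (qadd (qscale (f (qcross 1 1 y z)) x) (qscale (f (qcross 1 1 z x)) y))
           (qscale (f (qcross 1 1 x y)) z) = qzero"
proof -
  have "\<forall>f \<in> {q1, q2, q3}.
          qadd (qadd (qscale (f (qcross 1 1 y z)) x) (qscale (f (qcross 1 1 z x)) y))
            (qscale (f (qcross 1 1 x y)) z) = qzero"
    using assms(1-4)
    by (auto simp: pure_def qtriple_def qadd_def qscale_def qzero_def qcross_def)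
      (simp add: algebra_simps | algebra)+
  with assms(5) show ?thesis by blast
qed

lemma cross_combination_eq_qzero:
  fixes x y :: "'a::field quat"
  assumes "pure x" "pure y" "qcross 1 1 x y = qzero" "f \<in> {q1, q2, q3}"
  shows "qadd (qscale (f y) x) (qscale (- f x) y) = qzero"
proof -
  have "\<forall>f \<in> {q1, q2, q3}. qadd (qscale (f y) x) (qscale (- f x) y) = qzero"
    using assms(1-3)
    by (auto simp: pure_def qadd_def qscale_def qzero_def qcross_def) algebra+
  with assms(4) show ?thesis by blast
qed

lemma qtriple_eq_0_imp_lin_dep3:
  fixes x y z :: "'a::field quat"
  assumes "pure x" "pure y" "pure z" "qtriple x y z = 0"
  shows "lin_dep3 x y z"
proof (cases "qcross 1 1 x y = qzero")
  case False
  then obtain f where f: "f \<in> {q1, q2, q3}" "f (qcross 1 1 x y) \<noteq> 0"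
    using pure_eq_qzero_iff[OF pure_qcross] by blast
  then show ?thesis
    using cofactor_combination_eq_qzero[OF assms f(1)] unfolding lin_dep3_def by blast
next
  case cross_zero: True
  show ?thesis
  proof (cases "x = qzero")
    case True
    then have "qadd (qadd (qscale 1 x) (qscale 0 y)) (qscale 0 z) = qzero"
      by (simp add: qadd_def qscale_def qzero_def)
    then show ?thesis
      unfolding lin_dep3_def by (metis one_neq_zero)
  next
    case False
    then obtain f where f: "f \<in> {q1, q2, q3}" "f x \<noteq> 0"
      using pure_eq_qzero_iff[OF assms(1)] by blast
    then have "qadd (qadd (qscale (f y) x) (qscale (- f x) y)) (qscale 0 z) = qzero"
      using cross_combination_eq_qzero[OF assms(1,2) cross_zero f(1)]
      by (simp add: qadd_def qscale_def qzero_def)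
    then show ?thesis
      unfolding lin_dep3_def using f(2) neg_equal_0_iff_equal by blast
  qed
qed

lemma lin_dep3_iff_qtriple_eq_0:
  "pure x \<Longrightarrow> pure y \<Longrightarrow> pure z \<Longrightarrow> lin_dep3 x y z \<longleftrightarrow> qtriple x y z = 0"
  using lin_dep3_imp_qtriple_eq_0 qtriple_eq_0_imp_lin_dep3 by blast

lemma qtriple_qcross:
  "qtriple a b (qcross lam mu a b) =
     - mu * (q2 a * q3 b - q3 a * q2 b)^2 - lam * (q1 a * q3 b - q3 a * q1 b)^2
       + (q1 a * q2 b - q2 a * q1 b)^2"
  unfolding qtriple_def qcross_def by simp algebra

lemma qnorm_qcross:
  "qnorm lam mu (qcross lam mu a b) = lam * mu * qtriple a b (qcross lam mu a b)"
  unfolding qnorm_def qtriple_def qcross_def by simp algebra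

lemma qnorm_mult_eq_qdot_square_add_qnorm_qcross:
  assumes "pure a" "pure b"
  shows "qnorm lam mu a * qnorm lam mu b = (qdot lam mu a b)^2 + qnorm lam mu (qcross lam mu a b)"
proof -
  have real_parts: "q0 a = 0" "q0 b = 0"
    using assms by (simp_all add: pure_def)
  show ?thesis
    unfolding qnorm_def qdot_def qcross_def by (simp add: real_parts) algebra
qed

theorem lemma3p5:
  fixes lam mu :: "'a::field" and a b :: "'a quat"
  assumes "(2::'a) \<noteq> 0" and "lam \<noteq> 0" and "mu \<noteq> 0"
    and "pure a" and "pure b"
  shows "(lin_dep3 a b (qcross lam mu a b) \<longleftrightarrow>
            qnorm lam mu a * qnorm lam mu b = (qdot lam mu a b)^2)
       \<and> (qnorm lam mu a * qnorm lam mu b = (qdot lam mu a b)^2 \<longleftrightarrow>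
            qnorm lam mu (qcross lam mu a b) = 0)
       \<and> (qnorm lam mu (qcross lam mu a b) = 0 \<longleftrightarrow>
            - mu * (q2 a * q3 b - q3 a * q2 b)^2 - lam * (q1 a * q3 b - q3 a * q1 b)^2
              + (q1 a * q2 b - q2 a * q1 b)^2 = 0)"
proof -
  have dependent_iff: "lin_dep3 a b (qcross lam mu a b) \<longleftrightarrow> qtriple a b (qcross lam mu a b) = 0"
    using lin_dep3_iff_qtriple_eq_0 assms(4,5) pure_qcross by blast
  have isotropic_iff: "qnorm lam mu (qcross lam mu a b) = 0 \<longleftrightarrow> qtriple a b (qcross lam mu a b) = 0"
    using assms(2,3) by (simp add: qnorm_qcross)
  have lagrange_iff: "qnorm lam mu a * qnorm lam mu b = (qdot lam mu a b)^2 \<longleftrightarrow>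
      qnorm lam mu (qcross lam mu a b) = 0"
    using qnorm_mult_eq_qdot_square_add_qnorm_qcross[OF assms(4,5)] by simp
  show ?thesis
    using dependent_iff isotropic_iff lagrange_iff qtriple_qcross by metis
qed

end
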